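(* Let $f\in\mathcal{B}$ satisfy $\|f-f_0\|_{\mathcal{B}}<10$, where $f_0=10\cosh-12$. Then $f$ is transcendental and $f\colon\mathbb{R}\to\mathbb{R}$ is convex.
   Context: $\mathcal{B}$ is the real Banach space of real and even entire maps $f$ (i.e. $f(\bar z)=\overline{f(z)}$, $f(-z)=f(z)$) such that the sequence $(f^{(j)}(0))_{j\ge0}$ is bounded, with norm $\|f\|_{\mathcal{B}}=\sup_{j\ge0}|f^{(j)}(0)|$. $f_0\in\mathcal{B}$ is the map $z\mapsto 10\cosh(z)-12$. *)

theory Defs
  imports "HOL-Complex_Analysis.Complex_Analysis"
begin

text \<open>The real Banach space B: real, even entire maps whose sequence of
derivatives at 0 is bounded.\<close>
definition inB :: "(complex \<Rightarrow> complex) \<Rightarrow> bool" where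
  "inB f \<longleftrightarrow> f holomorphic_on UNIV
     \<and> (\<forall>z. f (cnj z) = cnj (f z))
     \<and> (\<forall>z. f (- z) = f z)
     \<and> bounded (range (\<lambda>j. (deriv ^^ j) f 0))"

definition normB :: "(complex \<Rightarrow> complex) \<Rightarrow> real" where
  "normB f = (SUP j. cmod ((deriv ^^ j) f 0))"

definition f0 :: "complex \<Rightarrow> complex" where
  "f0 z = 10 * cosh z - 12"

definition transcendental_entire :: "(complex \<Rightarrow> complex) \<Rightarrow> bool" where
  "transcendental_entire f \<longleftrightarrow> \<not> (\<exists>p. \<forall>z. f z = poly p z)"

end

theory Submission
  imports Defs
begin

text \<open>Every derivative of even order \<open>n \<ge> 2\<close> of \<open>f0\<close> at 0 equals 10, so the hypothesis
  puts the \<open>n\<close>-th derivative of \<open>f\<close> at 0 in the open disc of radius 10 about 10; in particular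
  it is nonzero and has positive real part. Infinitely many nonzero derivatives at 0 rule out a
  polynomial. On the real line, evenness of \<open>f\<close> kills the odd terms of its Taylor series at 0, so
  \<open>Re f\<close> is the pointwise limit of partial sums whose nonconstant terms are even powers with
  nonnegative coefficients; these are convex, and convexity passes to pointwise limits.\<close>

lemma higher_deriv_f0:
  "(deriv ^^ n) f0 =
     (\<lambda>z. if n = 0 then 10 * cosh z - 12 else if even n then 10 * cosh z else 10 * sinh z)"
proof (induction n)
  case 0
  then show ?case by (simp add: f0_def fun_eq_iff)
next
  case (Suc n)
  show ?case
  proof
    fix z :: complex
    have "((\<lambda>z. if n = 0 then 10 * cosh z - 12 else if even n then 10 * cosh z else 10 * sinh z)
          has_field_derivative (if even (Suc n) then 10 * cosh z else 10 * sinh z)) (at z)"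
      by (cases "n = 0"; cases "even n"; auto intro!: derivative_eq_intros)
    then show "(deriv ^^ Suc n) f0 z =
        (if Suc n = 0 then 10 * cosh z - 12 else if even (Suc n) then 10 * cosh z else 10 * sinh z)"
      using Suc by (simp add: DERIV_imp_deriv)
  qed
qed

lemma higher_deriv_f0_at_0: "(deriv ^^ n) f0 0 = (if n = 0 then -2 else if even n then 10 else 0)"
  by (simp add: higher_deriv_f0)

lemma holomorphic_f0: "f0 holomorphic_on UNIV"
  unfolding f0_def by (intro analytic_imp_holomorphic analytic_intros)

lemma bounded_higher_deriv_f0: "bounded (range (\<lambda>j. (deriv ^^ j) f0 0))"
  unfolding bounded_iff by (intro exI[of _ 10]) (auto simp: higher_deriv_f0_at_0)

lemma norm_higher_deriv_diff_le_normB: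
  assumes "f holomorphic_on UNIV" "g holomorphic_on UNIV"
    and "bounded (range (\<lambda>j. (deriv ^^ j) f 0))" "bounded (range (\<lambda>j. (deriv ^^ j) g 0))"
  shows "cmod ((deriv ^^ n) f 0 - (deriv ^^ n) g 0) \<le> normB (\<lambda>z. f z - g z)"
proof -
  have diff: "(deriv ^^ j) (\<lambda>z. f z - g z) 0 = (deriv ^^ j) f 0 - (deriv ^^ j) g 0" for j
    by (rule higher_deriv_diff[OF assms(1,2)]) auto
  obtain A B where A: "\<And>j. cmod ((deriv ^^ j) f 0) \<le> A" and B: "\<And>j. cmod ((deriv ^^ j) g 0) \<le> B"
    using assms(3,4) by (auto simp: bounded_iff)
  have "cmod ((deriv ^^ j) f 0 - (deriv ^^ j) g 0) \<le> A + B" for j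
    using norm_triangle_ineq4 add_mono[OF A B] by (rule order_trans)
  then have "bdd_above (range (\<lambda>j. cmod ((deriv ^^ j) (\<lambda>z. f z - g z) 0)))"
    unfolding diff by (rule bdd_aboveI2)
  then have "cmod ((deriv ^^ n) (\<lambda>z. f z - g z) 0) \<le> normB (\<lambda>z. f z - g z)"
    unfolding normB_def by (rule cSUP_upper[OF UNIV_I])
  then show ?thesis
    by (simp only: diff)
qed

lemma Re_higher_deriv_pos:
  assumes "inB f" "normB (\<lambda>z. f z - f0 z) < 10" "even n" "n \<noteq> 0"
  shows "Re ((deriv ^^ n) f 0) > 0"
proof -
  have "f holomorphic_on UNIV" "bounded (range (\<lambda>j. (deriv ^^ j) f 0))"
    using assms(1) by (simp_all add: inB_def)
  from norm_higher_deriv_diff_le_normB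
      [OF this(1) holomorphic_f0 this(2) bounded_higher_deriv_f0, where n = n]
  have "cmod ((deriv ^^ n) f 0 - 10) < 10"
    using assms(2-4) by (simp add: higher_deriv_f0_at_0)
  moreover have "\<bar>Re ((deriv ^^ n) f 0 - 10)\<bar> \<le> cmod ((deriv ^^ n) f 0 - 10)"
    by (rule abs_Re_le_cmod)
  ultimately show ?thesis
    by simp
qed

lemma higher_pderiv_eq_0: "degree p < n \<Longrightarrow> (pderiv ^^ n) p = 0"
  by (intro poly_eqI) (simp add: coeff_higher_pderiv coeff_eq_0)

lemma higher_deriv_poly: "(deriv ^^ n) (poly p) = poly ((pderiv ^^ n) p)"
  for p :: "'a::real_normed_field poly"
proof (induction n)
  case (Suc n)
  have "deriv (poly q) = poly (pderiv q)" for q :: "'a poly"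
    by (intro ext DERIV_imp_deriv poly_DERIV)
  with Suc show ?case
    by simp
qed simp

lemma transcendental_entireI:
  assumes "\<And>N. \<exists>n>N. (deriv ^^ n) f z \<noteq> 0"
  shows "transcendental_entire f"
  unfolding transcendental_entire_def
proof
  assume "\<exists>p. \<forall>w. f w = poly p w"
  then obtain p where "f = poly p" by auto
  moreover obtain n where "n > degree p" "(deriv ^^ n) f z \<noteq> 0"
    using assms by blast
  ultimately show False
    by (simp add: higher_deriv_poly higher_pderiv_eq_0)
qed

lemma entire_Re_sums_of_real:
  assumes "f holomorphic_on UNIV"
  shows "(\<lambda>n. Re ((deriv ^^ n) f 0) / fact n * x ^ n) sums Re (f (of_real x))"
proof -
  have series: "(\<lambda>n. (deriv ^^ n) f 0 / fact n * (of_real x - 0) ^ n) sums f (of_real x)"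
    by (rule holomorphic_power_series[where r = "norm (of_real x :: complex) + 1"])
       (auto intro: holomorphic_on_subset[OF assms])
  have Re_term: "Re (c / fact n * of_real x ^ n) = Re c / fact n * x ^ n" for c :: complex and n
  proof -
    have "c / fact n * of_real x ^ n = (x ^ n) *\<^sub>R c / of_real (fact n)"
      by (simp add: field_simps scaleR_conv_of_real)
    then show ?thesis
      by (simp only: Re_divide_of_real) simp
  qed
  from sums_Re[OF series] show ?thesis
    by (simp only: diff_zero Re_term)
qed

lemma even_entire_Re_sums_of_real:
  assumes "f holomorphic_on UNIV" "\<And>z. f (- z) = f z"
  shows "(\<lambda>n. if even n then Re ((deriv ^^ n) f 0) / fact n * x ^ n else 0)
           sums Re (f (of_real x))"
proof -
  let ?a = "\<lambda>n. Re ((deriv ^^ n) f 0) / fact n"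
  have "(\<lambda>n. (?a n * x ^ n + ?a n * (- x) ^ n) / 2)
          sums ((Re (f (of_real x)) + Re (f (of_real (- x)))) / 2)"
    by (intro sums_divide sums_add entire_Re_sums_of_real assms(1))
  also have "(\<lambda>n. (?a n * x ^ n + ?a n * (- x) ^ n) / 2) = (\<lambda>n. if even n then ?a n * x ^ n else 0)"
    by (auto simp: fun_eq_iff power_minus_odd)
  also have "(Re (f (of_real x)) + Re (f (of_real (- x)))) / 2 = Re (f (of_real x))"
    using assms(2)[of "of_real x"] by simp
  finally show ?thesis .
qed

lemma convex_on_LIMSEQ:
  assumes "\<And>n. convex_on S (F n)" "\<And>x. x \<in> S \<Longrightarrow> (\<lambda>n. F n x) \<longlonglongrightarrow> G x"
  shows "convex_on S G"
proof (rule convex_onI)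
  fix t :: real and x y assume t: "0 < t" "t < 1" and xy: "x \<in> S" "y \<in> S"
  let ?z = "(1 - t) *\<^sub>R x + t *\<^sub>R y"
  have "?z \<in> S"
    using convex_on_imp_convex[OF assms(1)] xy t by (simp add: convex_alt)
  then have lim_z: "(\<lambda>n. F n ?z) \<longlonglongrightarrow> G ?z"
    by (rule assms(2))
  have lim_xy: "(\<lambda>n. (1 - t) * F n x + t * F n y) \<longlonglongrightarrow> (1 - t) * G x + t * G y"
    using xy by (intro tendsto_intros assms(2))
  have "F n ?z \<le> (1 - t) * F n x + t * F n y" for n
    using convex_onD[OF assms(1)] t xy by simp
  then show "G ?z \<le> (1 - t) * G x + t * G y"
    by (intro LIMSEQ_le[OF lim_z lim_xy]) auto
qed (rule convex_on_imp_convex[OF assms(1)])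

lemma convex_on_sums:
  assumes "\<And>n. convex_on S (f n)" "\<And>x. x \<in> S \<Longrightarrow> (\<lambda>n. f n x) sums F x"
  shows "convex_on S F"
proof (rule convex_on_LIMSEQ)
  show "convex_on S (\<lambda>x. \<Sum>n<N. f n x)" for N
    by (induction N) (use assms(1) convex_on_imp_convex[OF assms(1)] in \<open>auto simp: convex_on_const\<close>)
  show "(\<lambda>N. \<Sum>n<N. f n x) \<longlonglongrightarrow> F x" if "x \<in> S" for x
    using assms(2)[OF that] by (simp add: sums_def)
qed

theorem lemma4p1:
  fixes f :: "complex \<Rightarrow> complex"
  assumes "inB f"
    and "normB (\<lambda>z. f z - f0 z) < 10"
  shows "transcendental_entire f \<and> convex_on UNIV (\<lambda>x::real. Re (f (complex_of_real x)))"
proof -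
  have hol: "f holomorphic_on UNIV" and even: "\<And>z. f (- z) = f z"
    using assms(1) by (auto simp: inB_def)
  have pos: "Re ((deriv ^^ n) f 0) > 0" if "even n" "n \<noteq> 0" for n
    using Re_higher_deriv_pos[OF assms that] .
  have "transcendental_entire f"
  proof (rule transcendental_entireI)
    show "\<exists>n>N. (deriv ^^ n) f 0 \<noteq> 0" for N
      using pos[of "2 * N + 2"] by (intro exI[of _ "2 * N + 2"]) auto
  qed
  moreover have "convex_on UNIV (\<lambda>x::real. Re (f (complex_of_real x)))"
  proof (rule convex_on_sums[OF _ even_entire_Re_sums_of_real[OF hol even]])
    show "convex_on UNIV (\<lambda>x. if even n then Re ((deriv ^^ n) f 0) / fact n * x ^ n else 0)" for n
      using pos[of n] convex_power_even[of n]
      by (cases "even n \<and> n \<noteq> 0") (auto simp: convex_on_const intro!: convex_on_cmul)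
  qed
  ultimately show ?thesis ..
qed

end
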